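(* Let $X$ be a standard one-dimensional Brownian motion starting at $0$, $p$ the atomic proposition with $X(\omega),t\models_n p$ iff $X_t(\omega)\geq1$, and $\phi_1:=\Box_{(1,2)}(\Diamond_{(1,4)}p\wedge\lnot\Diamond_{(1,3)}p)$, $\phi_2:=(\Diamond_{(1,3)}\phi_1)\wedge(\lnot\Diamond_{(1,2)}\phi_1)\wedge(\lnot\Diamond_{(2,3)}\phi_1)$, $\phi_3:=\Diamond_{(1,2)}\phi_2$, $\psi:=(\lnot p)\wedge(\lnot\Diamond_{(0,8)}p)\wedge\phi_3$. Let $n\geq2$. Then $X(\omega),0\not\models_n\psi$ for every $\omega\in\Omega$.
   Context: $\mathbb{N}/n:=\{k/n : k\in\mathbb{N}\}$. Discrete semantics at $t\in\mathbb{N}/n$: $\lnot,\wedge$ classical; $X(\omega),t\models_n\Diamond_I\phi$ iff $\exists s\in I\cap\mathbb{N}/n$ with $X(\omega),t+s\models_n\phi$; $X(\omega),t\models_n\Box_I\phi$ iff $\forall s\in I\cap\mathbb{N}/n$, $X(\omega),t+s\models_n\phi$. *)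

theory Defs
  imports Complex_Main
begin

definition grid :: "nat \<Rightarrow> real set" where
  "grid n = {real k / real n | k. True}"

datatype form = P | Neg form | Conj form form | Dia "real set" form | Bx "real set" form

text \<open>Discrete semantics: sat n x t phi means x, t |=_n phi, where x is a sample path
  (x t = X_t(omega)); p holds at t iff x t >= 1.\<close>
fun sat :: "nat \<Rightarrow> (real \<Rightarrow> real) \<Rightarrow> real \<Rightarrow> form \<Rightarrow> bool" where
  "sat n x t P = (x t \<ge> 1)"
| "sat n x t (Neg \<phi>) = (\<not> sat n x t \<phi>)"
| "sat n x t (Conj \<phi> \<psi>) = (sat n x t \<phi> \<and> sat n x t \<psi>)"
| "sat n x t (Dia I \<phi>) = (\<exists>s \<in> I \<inter> grid n. sat n x (t + s) \<phi>)"
| "sat n x t (Bx I \<phi>) = (\<forall>s \<in> I \<inter> grid n. sat n x (t + s) \<phi>)"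

definition phi1 :: form where
  "phi1 = Bx {1<..<2} (Conj (Dia {1<..<4} P) (Neg (Dia {1<..<3} P)))"

definition phi2 :: form where
  "phi2 = Conj (Dia {1<..<3} phi1) (Conj (Neg (Dia {1<..<2} phi1)) (Neg (Dia {2<..<3} phi1)))"

definition phi3 :: form where
  "phi3 = Dia {1<..<2} phi2"

definition psi :: form where
  "psi = Conj (Neg P) (Conj (Neg (Dia {0<..<8} P)) phi3)"

end

theory Submission
  imports Defs
begin

text \<open>At grid points only the set of indices \<open>i\<close> with \<open>X(i/n) \<ge> 1\<close> (the hits) matters.
  For \<open>n \<ge> 2\<close>, \<open>\<phi>\<^sub>1\<close> holds at \<open>k/n\<close> exactly when no index in \<open>[k+2n+2, k+5n-2]\<close> is a hit
  but \<open>k+5n-1\<close> or \<open>k+5n\<close> is. Such a pattern at \<open>k\<close> recurs at \<open>k-1\<close> or at \<open>k+1\<close> unless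
  \<open>k+2n+1\<close> is a hit. But \<open>\<phi>\<^sub>2\<close> at \<open>s/n\<close> forces \<open>\<phi>\<^sub>1\<close> at \<open>(s+2n)/n\<close> and at neither
  neighbouring grid point, so \<open>s+4n+1\<close> is a hit; since \<open>s < 2n\<close>, this index lies in
  \<open>(0, 8n)\<close>, where \<open>\<psi>\<close> forbids hits.\<close>

lemma sat_Dia_grid:
  "sat n x (real k / real n) (Dia I \<phi>) \<longleftrightarrow>
     (\<exists>l. real l / real n \<in> I \<and> sat n x (real (k + l) / real n) \<phi>)"
  by (auto simp: grid_def add_divide_distrib)

lemma sat_Bx_grid:
  "sat n x (real k / real n) (Bx I \<phi>) \<longleftrightarrow>
     (\<forall>l. real l / real n \<in> I \<longrightarrow> sat n x (real (k + l) / real n) \<phi>)"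
  by (auto simp: grid_def add_divide_distrib)

lemma grid_point_in_interval:
  assumes "0 < n"
  shows "real l / real n \<in> {real a<..<real b} \<longleftrightarrow> a * n < l \<and> l < b * n"
proof -
  have "real l / real n \<in> {real a<..<real b} \<longleftrightarrow> real (a * n) < real l \<and> real l < real (b * n)"
    using assms by (simp add: field_simps)
  then show ?thesis
    by (simp only: of_nat_less_iff)
qed

lemmas grid_point_in_formula_interval =
  grid_point_in_interval[where a = 0 and b = 8, unfolded of_nat_0 of_nat_1 of_nat_numeral]
  grid_point_in_interval[where a = 1 and b = 2, unfolded of_nat_0 of_nat_1 of_nat_numeral]
  grid_point_in_interval[where a = 1 and b = 3, unfolded of_nat_0 of_nat_1 of_nat_numeral]
  grid_point_in_interval[where a = 1 and b = 4, unfolded of_nat_0 of_nat_1 of_nat_numeral]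
  grid_point_in_interval[where a = 2 and b = 3, unfolded of_nat_0 of_nat_1 of_nat_numeral]

definition phi1_pattern :: "nat \<Rightarrow> (nat \<Rightarrow> bool) \<Rightarrow> nat \<Rightarrow> bool" where
  "phi1_pattern n p k \<longleftrightarrow>
     (\<forall>i. k + 2 * n + 2 \<le> i \<longrightarrow> i + 2 \<le> k + 5 * n \<longrightarrow> \<not> p i) \<and>
     (p (k + 5 * n - 1) \<or> p (k + 5 * n))"

text \<open>The hypothesis \<open>n \<ge> 2\<close> makes the first window \<open>k + j + [3n, 4n)\<close>, with \<open>j = n + 1\<close>,
  reach \<open>k + 5n - 1\<close>.\<close>

lemma windows_iff_phi1_pattern:
  fixes p :: "nat \<Rightarrow> bool"
  assumes "2 \<le> n"
  shows "(\<forall>j. n < j \<and> j < 2 * n \<longrightarrow>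
            (\<exists>l. (n < l \<and> l < 4 * n) \<and> p (k + j + l)) \<and>
            \<not> (\<exists>l. (n < l \<and> l < 3 * n) \<and> p (k + j + l)))
         \<longleftrightarrow> phi1_pattern n p k"
    (is "?windows \<longleftrightarrow> _")
proof
  assume windows: ?windows
  have gap: "\<not> p i" if lower: "k + 2 * n + 2 \<le> i" and upper: "i + 2 \<le> k + 5 * n" for i
  proof -
    obtain j l where "n < j" "j < 2 * n" "n < l" "l < 3 * n" "i = k + j + l"
    proof (cases "i \<le> k + 4 * n")
      case True
      then show ?thesis using lower assms by (intro that[of "n + 1" "i - k - n - 1"]) auto
    next
      case False
      then show ?thesis using upper assms by (intro that[of "2 * n - 1" "i - k - 2 * n + 1"]) auto
    qed
    then show ?thesis using windows by blast
  qed
  obtain l where "n < l" "l < 4 * n" and hit: "p (k + (n + 1) + l)"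
    using windows assms by force
  have "k + 5 * n < k + (n + 1) + l + 2"
    using gap[of "k + (n + 1) + l"] hit \<open>n < l\<close> by fastforce
  then have "k + (n + 1) + l = k + 5 * n - 1 \<or> k + (n + 1) + l = k + 5 * n"
    using \<open>l < 4 * n\<close> by linarith
  then have "p (k + 5 * n - 1) \<or> p (k + 5 * n)"
    using hit by metis
  then show "phi1_pattern n p k"
    unfolding phi1_pattern_def using gap by blast
next
  assume pattern: "phi1_pattern n p k"
  show ?windows
  proof (intro allI impI conjI)
    fix j assume j: "n < j \<and> j < 2 * n"
    show "\<exists>l. (n < l \<and> l < 4 * n) \<and> p (k + j + l)"
    proof (cases "p (k + 5 * n - 1)")
      case True
      then show ?thesis using j by (intro exI[of _ "5 * n - 1 - j"]) auto
    next
      case False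
      then have "p (k + 5 * n)" using pattern by (simp add: phi1_pattern_def)
      then show ?thesis using j by (intro exI[of _ "5 * n - j"]) auto
    qed
    show "\<not> (\<exists>l. (n < l \<and> l < 3 * n) \<and> p (k + j + l))"
      using j pattern by (auto simp: phi1_pattern_def)
  qed
qed

lemma isolated_phi1_pattern_hits:
  assumes "0 < n" and "0 < k" and pattern: "phi1_pattern n p k"
    and "\<not> phi1_pattern n p (k - 1)" and "\<not> phi1_pattern n p (k + 1)"
  shows "p (k + 2 * n + 1)"
proof (rule ccontr)
  assume "\<not> p (k + 2 * n + 1)"
  with pattern have gap: "\<not> p i" if "k + 2 * n + 1 \<le> i" "i + 2 \<le> k + 5 * n" for i
    using that unfolding phi1_pattern_def by (cases "i = k + 2 * n + 1") auto
  show False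
  proof (cases "p (k + 5 * n - 1)")
    case True
    then have "phi1_pattern n p (k - 1)"
      using gap \<open>0 < k\<close> unfolding phi1_pattern_def by auto
    with assms(4) show False ..
  next
    case False
    then have "\<not> p i" if "k + 2 * n + 3 \<le> i" "i + 1 \<le> k + 5 * n" for i
      using gap that by (cases "i = k + 5 * n - 1") auto
    moreover have "p (k + 5 * n)"
      using pattern False unfolding phi1_pattern_def by auto
    ultimately have "phi1_pattern n p (k + 1)"
      unfolding phi1_pattern_def by auto
    with assms(5) show False ..
  qed
qed

lemma sat_phi1_iff:
  assumes "2 \<le> n"
  shows "sat n x (real k / real n) phi1 \<longleftrightarrow> phi1_pattern n (\<lambda>i. 1 \<le> x (real i / real n)) k"
proof -
  have "0 < n" using assms by simp
  then have "sat n x (real k / real n) phi1 \<longleftrightarrow>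
      (\<forall>j. n < j \<and> j < 2 * n \<longrightarrow>
         (\<exists>l. (n < l \<and> l < 4 * n) \<and> 1 \<le> x (real (k + j + l) / real n)) \<and>
         \<not> (\<exists>l. (n < l \<and> l < 3 * n) \<and> 1 \<le> x (real (k + j + l) / real n)))"
    by (simp only: phi1_def sat.simps(1-3) sat_Bx_grid sat_Dia_grid
        grid_point_in_formula_interval mult_1)
  also have "\<dots> \<longleftrightarrow> phi1_pattern n (\<lambda>i. 1 \<le> x (real i / real n)) k"
    using windows_iff_phi1_pattern[OF assms] .
  finally show ?thesis .
qed

lemma sat_phi2_isolated_phi1_pattern:
  assumes "2 \<le> n" and "sat n x (real k / real n) phi2"
  defines "p \<equiv> \<lambda>i. 1 \<le> x (real i / real n)"
  shows "phi1_pattern n p (k + 2 * n)" and "\<not> phi1_pattern n p (k + 2 * n - 1)"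
    and "\<not> phi1_pattern n p (k + 2 * n + 1)"
proof -
  have "0 < n" using assms(1) by simp
  with assms(2) obtain j where "n < j" "j < 3 * n" and "phi1_pattern n p (k + j)"
    and no_earlier: "\<And>j. n < j \<Longrightarrow> j < 2 * n \<Longrightarrow> \<not> phi1_pattern n p (k + j)"
    and no_later: "\<And>j. 2 * n < j \<Longrightarrow> j < 3 * n \<Longrightarrow> \<not> phi1_pattern n p (k + j)"
    unfolding phi2_def sat.simps(2,3) sat_Dia_grid sat_phi1_iff[OF assms(1)] p_def
      grid_point_in_formula_interval[OF \<open>0 < n\<close>] mult_1
    by blast
  then have "j = 2 * n"
    using no_earlier no_later \<open>n < j\<close> \<open>j < 3 * n\<close> by (metis linorder_neqE_nat)
  with \<open>phi1_pattern n p (k + j)\<close> show "phi1_pattern n p (k + 2 * n)"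
    by simp
  show "\<not> phi1_pattern n p (k + 2 * n - 1)"
    using no_earlier[of "2 * n - 1"] assms(1) by simp
  show "\<not> phi1_pattern n p (k + 2 * n + 1)"
    using no_later[of "2 * n + 1"] assms(1) by simp
qed

theorem lemma5p5:
  fixes X :: "'w \<Rightarrow> real \<Rightarrow> real" and n :: nat
  assumes "n \<ge> 2"
  shows "\<forall>\<omega>. \<not> sat n (X \<omega>) 0 psi"
proof (intro allI notI)
  fix \<omega>
  define p where "p = (\<lambda>i. 1 \<le> X \<omega> (real i / real n))"
  have "0 < n" using assms by simp
  assume "sat n (X \<omega>) 0 psi"
  then have "sat n (X \<omega>) (real 0 / real n) psi" by simp
  then obtain k where "k < 2 * n" and "sat n (X \<omega>) (real k / real n) phi2"
    and quiet: "\<And>i. 0 < i \<Longrightarrow> i < 8 * n \<Longrightarrow> \<not> p i"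
    unfolding psi_def phi3_def sat.simps(1-3) sat_Dia_grid p_def add_0
      grid_point_in_formula_interval[OF \<open>0 < n\<close>] mult_0 mult_1
    by blast
  have isolated: "phi1_pattern n p (k + 2 * n)" "\<not> phi1_pattern n p (k + 2 * n - 1)"
    "\<not> phi1_pattern n p (k + 2 * n + 1)"
    using sat_phi2_isolated_phi1_pattern[OF assms \<open>sat n (X \<omega>) (real k / real n) phi2\<close>]
    unfolding p_def by blast+
  have "p (k + 2 * n + 2 * n + 1)"
    using \<open>0 < n\<close> isolated by (intro isolated_phi1_pattern_hits[of n "k + 2 * n" p]) simp_all
  moreover have "k + 2 * n + 2 * n + 1 < 8 * n"
    using \<open>k < 2 * n\<close> \<open>0 < n\<close> by linarith
  ultimately show False
    using quiet by simp
qed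

end
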